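(* Let $V$ be a real vector space of dimension $n$ and $k\ge2$ with $k\le n-1$. For standard isotropic subspaces $L\subseteq V\oplus\wedge^kV^*$ one has the implications $$\text{(C2s)}\Rightarrow\text{(C1)}\Leftrightarrow\text{(C3s)}\Rightarrow\text{(C2w) and (C3w)},$$ and these are distinct notions: there exist standard isotropic subspaces (for suitable $V$ and $k\ge2$) satisfying (C3w) but not (C2w); satisfying (C2w) but not (C3w); satisfying both (C2w) and (C3w) but not (C1); and satisfying (C3s) but not (C2s).
   Context: On $V\oplus\wedge^kV^*$ the pairing is $\langle X+\alpha,Y+\beta\rangle=i_X\beta+i_Y\alpha\in\wedge^{k-1}V^*$, with orthogonal $L^\perp$. $\mathrm{pr}_1,\mathrm{pr}_2$ are the projections onto $V$, $\wedge^kV^*$; $E=\mathrm{pr}_1(L)$, $A_L=L\cap\wedge^kV^*$. For $S\subseteq\wedge^kV^*$, $S^\circ=\{X\in V\mid i_X\eta=0\ \forall\eta\in S\}$; for $W\subseteq V$, $\mathrm{Ann}(W)=\{\alpha\in\wedge^kV^*\mid i_Y\alpha=0\ \forall Y\in W\}$. An isotropic ($L\subseteq L^\perp$) subspace is standard if $\mathrm{Ann}(E)^\circ=E$ (equivalently $\dim E=n$ or $\dim E\le n-k$). Conditions: (C1) $L=L^\perp$; (C2w) $L\subseteq L^\perp$ and $L\cap V=\mathrm{pr}_2(L)^\circ$; (C2s) $L\subseteq L^\perp$ and $\mathrm{Ann}(L\cap V)=\mathrm{pr}_2(L)$; (C3w) $L\subseteq L^\perp$ and $E=A_L^\circ$;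 (C3s) $L\subseteq L^\perp$ and $\mathrm{Ann}(E)=A_L$. *)

theory Defs
  imports "HOL-Analysis.Analysis"
begin

text \<open>Model: the n-dimensional real vector space V is the coordinate space R^n, realised as
  functions nat => real vanishing from index n on.  A k-form on V is a function taking a
  sequence of vectors (nat => vec) to a real number, that depends only on the first k
  vectors, vanishes unless these lie in V, and is multilinear and alternating in them
  (so that equality of forms is plain function equality).\<close>

type_synonym vec = "nat \<Rightarrow> real"
type_synonym form = "(nat \<Rightarrow> vec) \<Rightarrow> real"

definition Rn :: "nat \<Rightarrow> vec set" where
  "Rn n = {x. \<forall>i\<ge>n. x i = 0}"

definition vzero :: vec where "vzero = (\<lambda>i. 0)"
definition vadd :: "vec \<Rightarrow> vec \<Rightarrow> vec" where "vadd x y = (\<lambda>i. x i + y i)"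
definition vscale :: "real \<Rightarrow> vec \<Rightarrow> vec" where "vscale c x = (\<lambda>i. c * x i)"

definition is_form :: "nat \<Rightarrow> nat \<Rightarrow> form \<Rightarrow> bool" where
  "is_form n k \<alpha> \<longleftrightarrow>
     (\<forall>v w. (\<forall>i<k. v i = w i) \<longrightarrow> \<alpha> v = \<alpha> w) \<and>
     (\<forall>v. (\<exists>i<k. v i \<notin> Rn n) \<longrightarrow> \<alpha> v = 0) \<and>
     (\<forall>v i x y a b. i < k \<and> (\<forall>j<k. v j \<in> Rn n) \<and> x \<in> Rn n \<and> y \<in> Rn n \<longrightarrow>
        \<alpha> (v(i := vadd (vscale a x) (vscale b y))) = a * \<alpha> (v(i := x)) + b * \<alpha> (v(i := y))) \<and>
     (\<forall>v i j. i < k \<and> j < k \<and> i \<noteq> j \<and> v i = v j \<longrightarrow> \<alpha> v = 0)"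

definition Forms :: "nat \<Rightarrow> nat \<Rightarrow> form set" where
  "Forms n k = {\<alpha>. is_form n k \<alpha>}"

definition fzero :: form where "fzero = (\<lambda>v. 0)"
definition fadd :: "form \<Rightarrow> form \<Rightarrow> form" where "fadd \<alpha> \<beta> = (\<lambda>v. \<alpha> v + \<beta> v)"
definition fscale :: "real \<Rightarrow> form \<Rightarrow> form" where "fscale c \<alpha> = (\<lambda>v. c * \<alpha> v)"

definition contr :: "vec \<Rightarrow> form \<Rightarrow> form" where
  "contr X \<alpha> = (\<lambda>v. \<alpha> (case_nat X v))"

definition pairing :: "vec \<times> form \<Rightarrow> vec \<times> form \<Rightarrow> form" where
  "pairing p q = fadd (contr (fst p) (snd q)) (contr (fst q) (snd p))"

definition is_subspace :: "nat \<Rightarrow> nat \<Rightarrow> (vec \<times> form) set \<Rightarrow> bool" where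
  "is_subspace n k L \<longleftrightarrow>
     L \<subseteq> Rn n \<times> Forms n k \<and> (vzero, fzero) \<in> L \<and>
     (\<forall>p\<in>L. \<forall>q\<in>L. (vadd (fst p) (fst q), fadd (snd p) (snd q)) \<in> L) \<and>
     (\<forall>c. \<forall>p\<in>L. (vscale c (fst p), fscale c (snd p)) \<in> L)"

definition orth :: "nat \<Rightarrow> nat \<Rightarrow> (vec \<times> form) set \<Rightarrow> (vec \<times> form) set" where
  "orth n k L = {p \<in> Rn n \<times> Forms n k. \<forall>q\<in>L. pairing p q = fzero}"

definition isotropic :: "nat \<Rightarrow> nat \<Rightarrow> (vec \<times> form) set \<Rightarrow> bool" where
  "isotropic n k L \<longleftrightarrow> L \<subseteq> orth n k L"

definition polar :: "nat \<Rightarrow> form set \<Rightarrow> vec set" where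
  "polar n S = {X \<in> Rn n. \<forall>\<eta>\<in>S. contr X \<eta> = fzero}"

definition Ann :: "nat \<Rightarrow> nat \<Rightarrow> vec set \<Rightarrow> form set" where
  "Ann n k W = {\<alpha> \<in> Forms n k. \<forall>Y\<in>W. contr Y \<alpha> = fzero}"

definition prE :: "(vec \<times> form) set \<Rightarrow> vec set" where "prE L = fst ` L"
definition pr2 :: "(vec \<times> form) set \<Rightarrow> form set" where "pr2 L = snd ` L"
definition AL :: "(vec \<times> form) set \<Rightarrow> form set" where "AL L = {\<alpha>. (vzero, \<alpha>) \<in> L}"
definition LV :: "(vec \<times> form) set \<Rightarrow> vec set" where "LV L = {X. (X, fzero) \<in> L}"

definition standard :: "nat \<Rightarrow> nat \<Rightarrow> (vec \<times> form) set \<Rightarrow> bool" where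
  "standard n k L \<longleftrightarrow> polar n (Ann n k (prE L)) = prE L"

definition C1 :: "nat \<Rightarrow> nat \<Rightarrow> (vec \<times> form) set \<Rightarrow> bool" where
  "C1 n k L \<longleftrightarrow> L = orth n k L"
definition C2w :: "nat \<Rightarrow> nat \<Rightarrow> (vec \<times> form) set \<Rightarrow> bool" where
  "C2w n k L \<longleftrightarrow> isotropic n k L \<and> LV L = polar n (pr2 L)"
definition C2s :: "nat \<Rightarrow> nat \<Rightarrow> (vec \<times> form) set \<Rightarrow> bool" where
  "C2s n k L \<longleftrightarrow> isotropic n k L \<and> Ann n k (LV L) = pr2 L"
definition C3w :: "nat \<Rightarrow> nat \<Rightarrow> (vec \<times> form) set \<Rightarrow> bool" where
  "C3w n k L \<longleftrightarrow> isotropic n k L \<and> prE L = polar n (AL L)"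
definition C3s :: "nat \<Rightarrow> nat \<Rightarrow> (vec \<times> form) set \<Rightarrow> bool" where
  "C3s n k L \<longleftrightarrow> isotropic n k L \<and> Ann n k (prE L) = AL L"

definition std_iso :: "nat \<Rightarrow> nat \<Rightarrow> (vec \<times> form) set \<Rightarrow> bool" where
  "std_iso n k L \<longleftrightarrow> is_subspace n k L \<and> isotropic n k L \<and> standard n k L"

end

theory Submission
  imports Defs "HOL-Library.Function_Algebras"
begin

text \<open>Write \<open>E = pr\<^sub>1 L\<close> and \<open>A\<^sub>L = L \<inter> \<wedge>\<^sup>kV\<^sup>*\<close>. If \<open>L\<close> is standard and \<open>Ann(E) = A\<^sub>L\<close>, an element
  \<open>X + \<alpha>\<close> of \<open>L\<^sup>\<perp>\<close> has \<open>X \<in> Ann(E)\<^sup>\<circ> = E\<close>; subtracting a lift \<open>X + \<gamma> \<in> L\<close> leaves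
  \<open>\<alpha> - \<gamma> \<in> Ann(E) = A\<^sub>L\<close>, so \<open>L\<^sup>\<perp> = L\<close>. Conversely \<open>L = L\<^sup>\<perp>\<close> gives \<open>Ann(E) \<subseteq> A\<^sub>L\<close> and
  \<open>pr\<^sub>2(L)\<^sup>\<circ> \<subseteq> L \<inter> V\<close> at once, and standardness turns (C3s) into (C3w).
  The step (C2s) \<open>\<Longrightarrow>\<close> (C1) is the same argument with the roles of \<open>V\<close> and \<open>\<wedge>\<^sup>kV\<^sup>*\<close> exchanged;
  it needs \<open>Ann(U)\<^sup>\<circ> = U\<close> for the subspace \<open>U = L \<inter> V\<close> whenever \<open>Ann(U) \<noteq> 0\<close>, which holds
  because a nonzero form annihilating \<open>U\<close> can be pulled back along a linear map fixing \<open>U\<close>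
  so as to detect any given vector outside \<open>U\<close>. The four separating examples are explicit
  subspaces of \<open>\<real>\<^sup>n \<oplus> \<wedge>\<^sup>2(\<real>\<^sup>n)\<^sup>*\<close> for \<open>n = 3, 4, 5\<close>.\<close>

section \<open>Vectors and forms\<close>

lemma Rn_vadd [simp]: "x \<in> Rn n \<Longrightarrow> y \<in> Rn n \<Longrightarrow> vadd x y \<in> Rn n"
  and Rn_vscale [simp]: "x \<in> Rn n \<Longrightarrow> vscale c x \<in> Rn n"
  and Rn_vzero [simp]: "vzero \<in> Rn n"
  by (simp_all add: Rn_def vadd_def vscale_def vzero_def)

lemma vscale_one [simp]: "vscale 1 x = x"
  and vscale_zero [simp]: "vscale 0 x = vzero"
  and vscale_vzero [simp]: "vscale c vzero = vzero"
  and vadd_vzero [simp]: "vadd vzero x = x" "vadd x vzero = x"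
  by (simp_all add: vscale_def vadd_def vzero_def)

lemma fzero_apply [simp]: "fzero v = 0"
  and fadd_apply: "fadd \<alpha> \<beta> v = \<alpha> v + \<beta> v"
  and fscale_apply: "fscale c \<alpha> v = c * \<alpha> v"
  by (simp_all add: fzero_def fadd_def fscale_def)

lemma fadd_fzero [simp]: "fadd fzero \<alpha> = \<alpha>" "fadd \<alpha> fzero = \<alpha>"
  and fscale_fzero [simp]: "fscale c fzero = fzero"
  by (simp_all add: fadd_def fscale_def fzero_def)

lemma Rn_eqI:
  assumes "x \<in> Rn n" "y \<in> Rn n" "\<And>i. i < n \<Longrightarrow> x i = y i"
  shows "x = y"
proof
  fix i show "x i = y i"
    using assms by (cases "i < n") (auto simp: Rn_def)
qed

lemma form_cong: "\<alpha> \<in> Forms n k \<Longrightarrow> (\<And>i. i < k \<Longrightarrow> v i = w i) \<Longrightarrow> \<alpha> v = \<alpha> w"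
  and form_outside: "\<alpha> \<in> Forms n k \<Longrightarrow> i < k \<Longrightarrow> v i \<notin> Rn n \<Longrightarrow> \<alpha> v = 0"
  and form_linear: "\<alpha> \<in> Forms n k \<Longrightarrow> i < k \<Longrightarrow> (\<forall>j<k. v j \<in> Rn n) \<Longrightarrow> x \<in> Rn n \<Longrightarrow> y \<in> Rn n \<Longrightarrow>
    \<alpha> (v(i := vadd (vscale a x) (vscale b y))) = a * \<alpha> (v(i := x)) + b * \<alpha> (v(i := y))"
  and form_alternating: "\<alpha> \<in> Forms n k \<Longrightarrow> i < k \<Longrightarrow> j < k \<Longrightarrow> i \<noteq> j \<Longrightarrow> v i = v j \<Longrightarrow> \<alpha> v = 0"
  unfolding Forms_def is_form_def by blast+

lemma form_additive:
  assumes "\<alpha> \<in> Forms n k" "i < k" "\<forall>j<k. v j \<in> Rn n" "x \<in> Rn n" "y \<in> Rn n"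
  shows "\<alpha> (v(i := vadd x y)) = \<alpha> (v(i := x)) + \<alpha> (v(i := y))"
  using form_linear[OF assms, of 1 1] by simp

lemma form_antisymmetric:
  assumes \<alpha>: "\<alpha> \<in> Forms n k" and ij: "i < k" "j < k" "i \<noteq> j"
  shows "\<alpha> (v(i := v j, j := v i)) = - \<alpha> v"
proof (cases "\<forall>l<k. v l \<in> Rn n")
  case True
  define f where "f p q = \<alpha> (v(i := p, j := q))" for p q
  have in_Rn: "\<forall>l<k. (v(i := p, j := q)) l \<in> Rn n" if "p \<in> Rn n" "q \<in> Rn n" for p q
    using True that by auto
  have upd_i: "(v(i := p, j := q))(i := r) = v(i := r, j := q)"
    and upd_j: "(v(i := p, j := q))(j := r) = v(i := p, j := r)" for p q r
    using ij by (auto simp: fun_eq_iff)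
  have add_left: "f (vadd p p') q = f p q + f p' q" if "p \<in> Rn n" "p' \<in> Rn n" "q \<in> Rn n" for p p' q
    using form_additive[OF \<alpha> ij(1) in_Rn[OF that(1,3)] that(1,2)] by (simp only: upd_i f_def)
  have add_right: "f p (vadd q q') = f p q + f p q'" if "p \<in> Rn n" "q \<in> Rn n" "q' \<in> Rn n" for p q q'
    using form_additive[OF \<alpha> ij(2) in_Rn[OF that(1,2)] that(2,3)] by (simp only: upd_j f_def)
  have diag: "f p p = 0" for p
    unfolding f_def using ij by (intro form_alternating[OF \<alpha>, of i j]) auto
  have x: "v i \<in> Rn n" and y: "v j \<in> Rn n" using True ij by auto
  have "0 = f (vadd (v i) (v j)) (vadd (v i) (v j))" by (simp add: diag)
  also have "\<dots> = f (v i) (v i) + f (v i) (v j) + (f (v j) (v i) + f (v j) (v j))"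
    using add_left add_right x y by simp
  also have "\<dots> = f (v j) (v i) + f (v i) (v j)" by (simp add: diag)
  finally show ?thesis by (simp add: f_def)
next
  case False
  moreover have "(\<forall>l<k. (v(i := v j, j := v i)) l \<in> Rn n) \<longleftrightarrow> (\<forall>l<k. v l \<in> Rn n)"
    using ij by auto
  ultimately show ?thesis using form_outside[OF \<alpha>] by (metis neg_equal_0_iff_equal)
qed

lemma fzero_Forms: "fzero \<in> Forms n k"
  unfolding Forms_def is_form_def fzero_def by simp

lemma fadd_Forms:
  assumes \<alpha>: "\<alpha> \<in> Forms n k" and \<beta>: "\<beta> \<in> Forms n k"
  shows "fadd \<alpha> \<beta> \<in> Forms n k"
  unfolding Forms_def mem_Collect_eq is_form_def
proof (intro conjI allI impI)
  fix v w :: "nat \<Rightarrow> vec" assume "\<forall>i<k. v i = w i"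
  then show "fadd \<alpha> \<beta> v = fadd \<alpha> \<beta> w"
    using form_cong[OF \<alpha>, of v w] form_cong[OF \<beta>, of v w] by (simp add: fadd_apply)
next
  fix v :: "nat \<Rightarrow> vec" assume "\<exists>i<k. v i \<notin> Rn n"
  then show "fadd \<alpha> \<beta> v = 0" using form_outside[OF \<alpha>] form_outside[OF \<beta>] by (auto simp: fadd_apply)
next
  fix v :: "nat \<Rightarrow> vec" and i x y a b
  assume "i < k \<and> (\<forall>j<k. v j \<in> Rn n) \<and> x \<in> Rn n \<and> y \<in> Rn n"
  then show "fadd \<alpha> \<beta> (v(i := vadd (vscale a x) (vscale b y))) =
      a * fadd \<alpha> \<beta> (v(i := x)) + b * fadd \<alpha> \<beta> (v(i := y))"
    using form_linear[OF \<alpha>, of i v x y a b] form_linear[OF \<beta>, of i v x y a b]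
    by (simp add: fadd_apply algebra_simps)
next
  fix v :: "nat \<Rightarrow> vec" and i j assume "i < k \<and> j < k \<and> i \<noteq> j \<and> v i = v j"
  then show "fadd \<alpha> \<beta> v = 0"
    using form_alternating[OF \<alpha>, of i j v] form_alternating[OF \<beta>, of i j v] by (simp add: fadd_apply)
qed

lemma fscale_Forms:
  assumes \<alpha>: "\<alpha> \<in> Forms n k"
  shows "fscale c \<alpha> \<in> Forms n k"
  unfolding Forms_def mem_Collect_eq is_form_def
proof (intro conjI allI impI)
  fix v w :: "nat \<Rightarrow> vec" assume "\<forall>i<k. v i = w i"
  then show "fscale c \<alpha> v = fscale c \<alpha> w" using form_cong[OF \<alpha>, of v w] by (simp add: fscale_apply)
next
  fix v :: "nat \<Rightarrow> vec" assume "\<exists>i<k. v i \<notin> Rn n"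
  then show "fscale c \<alpha> v = 0" using form_outside[OF \<alpha>] by (auto simp: fscale_apply)
next
  fix v :: "nat \<Rightarrow> vec" and i x y a b
  assume "i < k \<and> (\<forall>j<k. v j \<in> Rn n) \<and> x \<in> Rn n \<and> y \<in> Rn n"
  then show "fscale c \<alpha> (v(i := vadd (vscale a x) (vscale b y))) =
      a * fscale c \<alpha> (v(i := x)) + b * fscale c \<alpha> (v(i := y))"
    using form_linear[OF \<alpha>, of i v x y a b] by (simp add: fscale_apply algebra_simps)
next
  fix v :: "nat \<Rightarrow> vec" and i j assume "i < k \<and> j < k \<and> i \<noteq> j \<and> v i = v j"
  then show "fscale c \<alpha> v = 0" using form_alternating[OF \<alpha>, of i j v] by (simp add: fscale_apply)
qed

lemma contr_fzero [simp]: "contr X fzero = fzero"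
  and contr_fadd: "contr X (fadd \<alpha> \<beta>) = fadd (contr X \<alpha>) (contr X \<beta>)"
  and contr_fscale: "contr X (fscale c \<alpha>) = fscale c (contr X \<alpha>)"
  by (simp_all add: contr_def fadd_def fscale_def fzero_def)

lemma contr_apply_tail: "contr X \<alpha> (\<lambda>i. v (Suc i)) = \<alpha> (v(0 := X))"
  unfolding contr_def by (rule arg_cong[where f = \<alpha>]) (simp add: fun_eq_iff split: nat.split)

lemma contr_linear:
  assumes \<alpha>: "\<alpha> \<in> Forms n k" and k: "1 \<le> k" and XY: "X \<in> Rn n" "Y \<in> Rn n"
  shows "contr (vadd (vscale a X) (vscale b Y)) \<alpha> = fadd (fscale a (contr X \<alpha>)) (fscale b (contr Y \<alpha>))"
proof
  fix v
  have upd: "(case_nat X v)(0 := Z) = case_nat Z v" for Z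
    by (simp add: fun_eq_iff split: nat.split)
  show "contr (vadd (vscale a X) (vscale b Y)) \<alpha> v = fadd (fscale a (contr X \<alpha>)) (fscale b (contr Y \<alpha>)) v"
  proof (cases "\<forall>j<k. case_nat X v j \<in> Rn n")
    case True
    then show ?thesis
      using form_linear[OF \<alpha> _ True XY, of 0 a b] k by (simp add: contr_def fadd_apply fscale_apply upd)
  next
    case False
    then obtain j where j: "j < k" "case_nat X v j \<notin> Rn n" by auto
    then obtain i where "j = Suc i" using XY by (cases j) auto
    then have "\<alpha> (case_nat Z v) = 0" for Z using form_outside[OF \<alpha> j(1), of "case_nat Z v"] j(2) by simp
    then show ?thesis by (simp add: contr_def fadd_apply fscale_apply)
  qed
qed

lemma contr_vzero: "\<alpha> \<in> Forms n k \<Longrightarrow> 1 \<le> k \<Longrightarrow> contr vzero \<alpha> = fzero"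
  using contr_linear[of \<alpha> n k vzero vzero 0 0] by (simp add: fun_eq_iff fadd_apply fscale_apply)

lemma form_slot_contr_fzero:
  assumes \<alpha>: "\<alpha> \<in> Forms n k" and m: "m < k" and Y: "contr Y \<alpha> = fzero"
  shows "\<alpha> (v(m := Y)) = 0"
proof -
  have slot0: "\<alpha> (w(0 := Y)) = 0" for w
    using Y contr_apply_tail[of Y \<alpha> w] by simp
  show ?thesis
  proof (cases "m = 0")
    case True then show ?thesis using slot0 by simp
  next
    case False
    have "\<alpha> ((v(m := Y))(0 := (v(m := Y)) m, m := (v(m := Y)) 0)) = - \<alpha> (v(m := Y))"
      using m False by (intro form_antisymmetric[OF \<alpha>]) auto
    moreover have "(v(m := Y))(0 := (v(m := Y)) m, m := (v(m := Y)) 0) = (v(m := v 0))(0 := Y)"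
      using False by (auto simp: fun_eq_iff)
    ultimately show ?thesis using slot0 by (metis neg_equal_0_iff_equal)
  qed
qed

lemma form_eq_fzeroI:
  assumes \<alpha>: "\<alpha> \<in> Forms n k" and k: "1 \<le> k" and contr: "\<And>X. X \<in> Rn n \<Longrightarrow> contr X \<alpha> = fzero"
  shows "\<alpha> = fzero"
proof
  fix v
  show "\<alpha> v = fzero v"
  proof (cases "v 0 \<in> Rn n")
    case True
    then show ?thesis using form_slot_contr_fzero[OF \<alpha> _ contr[OF True], of 0 v] k by simp
  next
    case False
    then show ?thesis using form_outside[OF \<alpha>, of 0 v] k by simp
  qed
qed

section \<open>Isotropic subspaces\<close>

lemma pairing_Pair [simp]: "pairing (X, \<alpha>) (Y, \<beta>) = fadd (contr X \<beta>) (contr Y \<alpha>)"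
  by (simp add: pairing_def)

lemma mem_prE: "X \<in> prE L \<longleftrightarrow> (\<exists>\<alpha>. (X, \<alpha>) \<in> L)"
  and mem_pr2: "\<alpha> \<in> pr2 L \<longleftrightarrow> (\<exists>X. (X, \<alpha>) \<in> L)"
  and mem_AL: "\<alpha> \<in> AL L \<longleftrightarrow> (vzero, \<alpha>) \<in> L"
  and mem_LV: "X \<in> LV L \<longleftrightarrow> (X, fzero) \<in> L"
  by (force simp: prE_def pr2_def AL_def LV_def)+

lemma subspace_mem: "is_subspace n k L \<Longrightarrow> (X, \<alpha>) \<in> L \<Longrightarrow> X \<in> Rn n \<and> \<alpha> \<in> Forms n k"
  and subspace_vzero: "is_subspace n k L \<Longrightarrow> (vzero, fzero) \<in> L"
  and subspace_add: "is_subspace n k L \<Longrightarrow> (X, \<alpha>) \<in> L \<Longrightarrow> (Y, \<beta>) \<in> L \<Longrightarrow> (vadd X Y, fadd \<alpha> \<beta>) \<in> L"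
  and subspace_scale: "is_subspace n k L \<Longrightarrow> (X, \<alpha>) \<in> L \<Longrightarrow> (vscale c X, fscale c \<alpha>) \<in> L"
  unfolding is_subspace_def by (fastforce+)[3] (metis fst_conv snd_conv)

lemma orthI:
  "X \<in> Rn n \<Longrightarrow> \<alpha> \<in> Forms n k \<Longrightarrow> (\<And>Y \<beta>. (Y, \<beta>) \<in> L \<Longrightarrow> fadd (contr X \<beta>) (contr Y \<alpha>) = fzero)
    \<Longrightarrow> (X, \<alpha>) \<in> orth n k L"
  unfolding orth_def by auto

lemma orthD:
  "(X, \<alpha>) \<in> orth n k L \<Longrightarrow> X \<in> Rn n \<and> \<alpha> \<in> Forms n k"
  "(X, \<alpha>) \<in> orth n k L \<Longrightarrow> (Y, \<beta>) \<in> L \<Longrightarrow> fadd (contr X \<beta>) (contr Y \<alpha>) = fzero"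
  unfolding orth_def by fastforce+

lemma isotropicD:
  "isotropic n k L \<Longrightarrow> (X, \<alpha>) \<in> L \<Longrightarrow> (Y, \<beta>) \<in> L \<Longrightarrow> fadd (contr X \<beta>) (contr Y \<alpha>) = fzero"
  unfolding isotropic_def using orthD(2) by blast

lemma AL_subset_Ann_prE:
  assumes L: "is_subspace n k L" "isotropic n k L" and k: "1 \<le> k"
  shows "AL L \<subseteq> Ann n k (prE L)"
proof
  fix \<alpha> assume "\<alpha> \<in> AL L"
  then have \<alpha>: "(vzero, \<alpha>) \<in> L" by (simp add: mem_AL)
  have "contr Y \<alpha> = fzero" if "(Y, \<beta>) \<in> L" for Y \<beta>
    using isotropicD[OF L(2) \<alpha> that] contr_vzero[of \<beta> n k] k subspace_mem[OF L(1) that] by simp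
  then show "\<alpha> \<in> Ann n k (prE L)" using subspace_mem[OF L(1) \<alpha>] by (auto simp: Ann_def mem_prE)
qed

lemma prE_subset_polar_AL:
  assumes L: "is_subspace n k L" "isotropic n k L" and k: "1 \<le> k"
  shows "prE L \<subseteq> polar n (AL L)"
proof
  fix X assume "X \<in> prE L"
  then obtain \<gamma> where \<gamma>: "(X, \<gamma>) \<in> L" by (auto simp: mem_prE)
  have "contr X \<alpha> = fzero" if "(vzero, \<alpha>) \<in> L" for \<alpha>
    using isotropicD[OF L(2) \<gamma> that] contr_vzero[of \<gamma> n k] k subspace_mem[OF L(1) \<gamma>] by simp
  then show "X \<in> polar n (AL L)" using subspace_mem[OF L(1) \<gamma>] by (auto simp: polar_def mem_AL)
qed

lemma LV_subset_polar_pr2: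
  assumes L: "is_subspace n k L" "isotropic n k L"
  shows "LV L \<subseteq> polar n (pr2 L)"
proof
  fix X assume "X \<in> LV L"
  then have X: "(X, fzero) \<in> L" by (simp add: mem_LV)
  have "contr X \<eta> = fzero" if "(Y, \<eta>) \<in> L" for Y \<eta>
    using isotropicD[OF L(2) X that] by simp
  then show "X \<in> polar n (pr2 L)" using subspace_mem[OF L(1) X] by (auto simp: polar_def mem_pr2)
qed

section \<open>Annihilators of subspaces\<close>

lemma vadd_eq_plus: "vadd x y = x + y"
  and vzero_eq_0: "vzero = 0"
  by (simp_all add: vadd_def vzero_def plus_fun_def zero_fun_def)

interpretation vs: vector_space vscale
  by unfold_locales (auto simp: vscale_def plus_fun_def algebra_simps)

interpretation vs_pair: vector_space_pair vscale vscale ..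

lemma slot_kernel_subspace:
  assumes \<beta>: "\<beta> \<in> Forms n k" and m: "m < k" and u: "\<forall>i<k. u i \<in> Rn n"
  shows "vs.subspace {s \<in> Rn n. \<beta> (u(m := s)) = 0}"
  unfolding vs.subspace_def
proof (intro conjI ballI allI)
  show "0 \<in> {s \<in> Rn n. \<beta> (u(m := s)) = 0}"
    using form_linear[OF \<beta> m u Rn_vzero Rn_vzero, of 0 0] by (simp add: vzero_eq_0[symmetric])
next
  fix x y assume "x \<in> {s \<in> Rn n. \<beta> (u(m := s)) = 0}" "y \<in> {s \<in> Rn n. \<beta> (u(m := s)) = 0}"
  then show "x + y \<in> {s \<in> Rn n. \<beta> (u(m := s)) = 0}"
    using form_additive[OF \<beta> m u, of x y] Rn_vadd[of x n y] by (simp add: vadd_eq_plus)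
next
  fix c x assume "x \<in> {s \<in> Rn n. \<beta> (u(m := s)) = 0}"
  then show "vscale c x \<in> {s \<in> Rn n. \<beta> (u(m := s)) = 0}"
    using form_linear[OF \<beta> m u, of x x c 0] by simp
qed

text \<open>Exchange, one slot at a time: if \<open>W\<close> entered the span, some \<open>u m\<close> would lie in the span of
  \<open>W\<close>, \<open>U\<close> and the earlier \<open>u i\<close>, all of which \<open>\<beta>\<close> kills in slot \<open>m\<close>.\<close>
lemma notin_span_slots:
  assumes \<beta>: "\<beta> \<in> Forms n k" and \<beta>u: "\<beta> u \<noteq> 0" and U: "vs.subspace U" "U \<subseteq> Rn n"
    and \<beta>U: "\<forall>Y\<in>U. contr Y \<beta> = fzero"
    and W: "W \<in> Rn n" "W \<notin> U" and slots: "\<forall>m. 1 \<le> m \<and> m < k \<longrightarrow> \<beta> (u(m := W)) = 0"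
  shows "W \<notin> vs.span (U \<union> u ` {1..<k})"
proof -
  have u: "\<forall>i<k. u i \<in> Rn n" using form_outside[OF \<beta>] \<beta>u by blast
  have "W \<notin> vs.span (U \<union> u ` {1..<m})" if "m \<le> k" for m
    using that
  proof (induction m)
    case 0
    then show ?case using W(2) U(1) by (simp add: vs.span_eq_iff[THEN iffD2])
  next
    case (Suc m)
    show ?case
    proof (cases "m = 0")
      case True
      then show ?thesis using W(2) U(1) by (simp add: vs.span_eq_iff[THEN iffD2])
    next
      case False
      have IH: "W \<notin> vs.span (U \<union> u ` {1..<m})" using Suc by simp
      have insert: "U \<union> u ` {1..<Suc m} = insert (u m) (U \<union> u ` {1..<m})"
        using False by (auto simp: atLeastLessThanSuc)
      have "vs.span (insert W (U \<union> u ` {1..<m})) \<subseteq> {s \<in> Rn n. \<beta> (u(m := s)) = 0}"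
      proof (rule vs.span_minimal[OF _ slot_kernel_subspace[OF \<beta> _ u]])
        have "\<beta> (u(m := u i)) = 0" if "i < m" for i
          by (rule form_alternating[OF \<beta>, of i m]) (use that Suc.prems in auto)
        then show "insert W (U \<union> u ` {1..<m}) \<subseteq> {s \<in> Rn n. \<beta> (u(m := s)) = 0}"
          using Suc.prems False W(1) slots U(2) u form_slot_contr_fzero[OF \<beta>, of m _ u] \<beta>U
          by auto
      qed (use Suc.prems in simp)
      moreover have "\<beta> (u(m := u m)) \<noteq> 0" using \<beta>u by simp
      ultimately have "u m \<notin> vs.span (insert W (U \<union> u ` {1..<m}))" by blast
      then show ?thesis using vs.in_span_insert IH insert by metis
    qed
  qed
  then show ?thesis by simp
qed

lemma linear_map_into_Rn_fixing:
  assumes S: "S \<subseteq> Rn n" and W: "W \<notin> vs.span S" and t: "t \<in> Rn n"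
  obtains A where "\<And>x. A x \<in> Rn n"
    and "\<And>a b x y. A (vadd (vscale a x) (vscale b y)) = vadd (vscale a (A x)) (vscale b (A y))"
    and "\<And>x. x \<in> S \<Longrightarrow> A x = x" and "A W = t"
proof -
  obtain B where B: "B \<subseteq> S" "vs.independent B" "S \<subseteq> vs.span B"
    by (rule vs.maximal_independent_subset)
  have W_span: "W \<notin> vs.span B" using W B(1) vs.span_mono by blast
  then have WB: "W \<notin> B" using vs.span_base by blast
  have "vs.independent (insert W B)" using W_span B(2) by (rule vs.independent_insertI)
  then obtain g where g: "Vector_Spaces.linear vscale vscale g"
    and gB: "\<forall>x\<in>insert W B. g x = (if x = W then t else x)"
    using vs_pair.linear_independent_extend[of _ "\<lambda>x. if x = W then t else x"] by blast
  have g_fix: "g x = x" if "x \<in> S" for x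
  proof -
    have "g x = id x"
      by (rule vs_pair.linear_eq_on[OF g vs.linear_id, of x B]) (use that B(3) gB WB in auto)
    then show ?thesis by simp
  qed
  define A where "A x = (\<lambda>i. if i < n then g x i else 0)" for x
  show thesis
  proof
    show "A x \<in> Rn n" for x by (simp add: A_def Rn_def)
    show "A (vadd (vscale a x) (vscale b y)) = vadd (vscale a (A x)) (vscale b (A y))" for a b x y
      using vs_pair.linear_add[OF g] vs_pair.linear_scale[OF g]
      by (simp add: A_def fun_eq_iff vadd_eq_plus[symmetric]) (simp add: vadd_def vscale_def)
    show "A x = x" if "x \<in> S" for x
      using g_fix[OF that] S that by (auto simp: A_def Rn_def fun_eq_iff)
    show "A W = t"
      using gB t by (auto simp: A_def Rn_def fun_eq_iff)
  qed
qed

definition form_pullback :: "nat \<Rightarrow> nat \<Rightarrow> (vec \<Rightarrow> vec) \<Rightarrow> form \<Rightarrow> form" where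
  "form_pullback n k A \<beta> v = (if \<forall>i<k. v i \<in> Rn n then \<beta> (\<lambda>i. A (v i)) else 0)"

lemma form_pullback_fzero [simp]: "form_pullback n k A fzero = fzero"
  by (simp add: form_pullback_def fun_eq_iff)

lemma form_pullback_Forms:
  assumes \<beta>: "\<beta> \<in> Forms n k" and A_Rn: "\<And>x. A x \<in> Rn n"
    and A_linear: "\<And>a b x y. A (vadd (vscale a x) (vscale b y)) = vadd (vscale a (A x)) (vscale b (A y))"
  shows "form_pullback n k A \<beta> \<in> Forms n k"
  unfolding Forms_def mem_Collect_eq is_form_def
proof (intro conjI allI impI)
  fix v w :: "nat \<Rightarrow> vec" assume "\<forall>i<k. v i = w i"
  then show "form_pullback n k A \<beta> v = form_pullback n k A \<beta> w"
    using form_cong[OF \<beta>, of "\<lambda>i. A (v i)" "\<lambda>i. A (w i)"] by (auto simp: form_pullback_def)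
next
  fix v :: "nat \<Rightarrow> vec" assume "\<exists>i<k. v i \<notin> Rn n"
  then show "form_pullback n k A \<beta> v = 0" by (auto simp: form_pullback_def)
next
  fix v :: "nat \<Rightarrow> vec" and i x y a b
  assume v: "i < k \<and> (\<forall>j<k. v j \<in> Rn n) \<and> x \<in> Rn n \<and> y \<in> Rn n"
  have pull: "form_pullback n k A \<beta> (v(i := z)) = \<beta> ((\<lambda>j. A (v j))(i := A z))" if "z \<in> Rn n" for z
  proof -
    have "\<forall>j<k. (v(i := z)) j \<in> Rn n" using v that by simp
    moreover have "(\<lambda>j. A ((v(i := z)) j)) = (\<lambda>j. A (v j))(i := A z)" by (simp add: fun_eq_iff)
    ultimately show ?thesis by (simp only: form_pullback_def if_P)
  qed
  show "form_pullback n k A \<beta> (v(i := vadd (vscale a x) (vscale b y))) =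
      a * form_pullback n k A \<beta> (v(i := x)) + b * form_pullback n k A \<beta> (v(i := y))"
    using v form_linear[OF \<beta>, of i "\<lambda>j. A (v j)" "A x" "A y" a b] A_Rn
    by (simp add: pull A_linear del: fun_upd_apply)
next
  fix v :: "nat \<Rightarrow> vec" and i j assume "i < k \<and> j < k \<and> i \<noteq> j \<and> v i = v j"
  then show "form_pullback n k A \<beta> v = 0"
    using form_alternating[OF \<beta>, of i j "\<lambda>l. A (v l)"] by (simp add: form_pullback_def)
qed

lemma contr_form_pullback:
  assumes "X \<in> Rn n" "1 \<le> k"
  shows "contr X (form_pullback n k A \<beta>) = form_pullback n (k - 1) A (contr (A X) \<beta>)"
proof
  fix v
  have "(\<forall>i<k. case_nat X v i \<in> Rn n) \<longleftrightarrow> (\<forall>i<k - 1. v i \<in> Rn n)"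
    using assms by (auto simp: less_diff_conv split: nat.split)
  moreover have "(\<lambda>i. A (case_nat X v i)) = case_nat (A X) (\<lambda>i. A (v i))"
    by (simp add: fun_eq_iff split: nat.split)
  ultimately show "contr X (form_pullback n k A \<beta>) v = form_pullback n (k - 1) A (contr (A X) \<beta>) v"
    by (auto simp: contr_def form_pullback_def)
qed

text \<open>The pullback of \<open>\<beta>\<close> along a linear map fixing \<open>U\<close> and \<open>u 1, \<dots>, u (k - 1)\<close> and sending \<open>W\<close>
  to \<open>u 0\<close> still annihilates \<open>U\<close>, but \<open>i\<^sub>W\<close> of it evaluates to \<open>\<beta> u\<close>.\<close>
lemma Ann_contr_nonzero_outside_span:
  assumes U: "U \<subseteq> Rn n" and k: "1 \<le> k" and \<beta>: "\<beta> \<in> Forms n k" and \<beta>u: "\<beta> u \<noteq> 0"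
    and \<beta>U: "\<forall>Y\<in>U. contr Y \<beta> = fzero"
    and W: "W \<in> Rn n" "W \<notin> vs.span (U \<union> u ` {1..<k})"
  obtains \<alpha> where "\<alpha> \<in> Ann n k U" and "contr W \<alpha> \<noteq> fzero"
proof -
  have u: "\<forall>i<k. u i \<in> Rn n" using form_outside[OF \<beta>] \<beta>u by blast
  have S_Rn: "U \<union> u ` {1..<k} \<subseteq> Rn n" using U u by auto
  have u0: "u 0 \<in> Rn n" using u k by simp
  obtain A where A_Rn: "\<And>x. A x \<in> Rn n"
    and A_linear: "\<And>a b x y. A (vadd (vscale a x) (vscale b y)) = vadd (vscale a (A x)) (vscale b (A y))"
    and A_fix: "\<And>x. x \<in> U \<union> u ` {1..<k} \<Longrightarrow> A x = x" and A_W: "A W = u 0"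
    using linear_map_into_Rn_fixing[OF S_Rn W(2) u0] by blast
  define \<alpha> where "\<alpha> = form_pullback n k A \<beta>"
  have "contr Y \<alpha> = fzero" if "Y \<in> U" for Y
  proof -
    have "contr Y \<alpha> = form_pullback n (k - 1) A (contr Y \<beta>)"
      using contr_form_pullback[of Y n k A \<beta>] A_fix[of Y] that U k by (auto simp: \<alpha>_def)
    then show ?thesis using \<beta>U that by simp
  qed
  then have "\<alpha> \<in> Ann n k U"
    using form_pullback_Forms[OF \<beta> A_Rn A_linear] by (simp add: Ann_def \<alpha>_def)
  moreover have "contr W \<alpha> (\<lambda>i. u (Suc i)) = \<beta> u"
  proof -
    have "\<forall>i<k - 1. u (Suc i) \<in> Rn n" using u by simp
    then have "contr W \<alpha> (\<lambda>i. u (Suc i)) = contr (u 0) \<beta> (\<lambda>i. A (u (Suc i)))"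
      using W(1) k A_W by (simp add: \<alpha>_def contr_form_pullback form_pullback_def)
    also have "\<dots> = \<beta> (case_nat (u 0) (\<lambda>i. A (u (Suc i))))" by (simp add: contr_def)
    also have "\<dots> = \<beta> u"
      using A_fix by (intro form_cong[OF \<beta>]) (auto split: nat.split)
    finally show ?thesis .
  qed
  with \<beta>u have "contr W \<alpha> \<noteq> fzero" by (metis fzero_apply)
  ultimately show thesis by (rule that)
qed

lemma polar_Ann_subset:
  assumes U: "vs.subspace U" "U \<subseteq> Rn n" and k: "1 \<le> k"
    and \<beta>: "\<beta> \<in> Ann n k U" "\<beta> \<noteq> fzero"
  shows "polar n (Ann n k U) \<subseteq> U"
proof
  fix W assume "W \<in> polar n (Ann n k U)"
  then have W_Rn: "W \<in> Rn n" and W_contr: "\<And>\<alpha>. \<alpha> \<in> Ann n k U \<Longrightarrow> contr W \<alpha> = fzero"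
    by (auto simp: polar_def)
  show "W \<in> U"
  proof (rule ccontr)
    assume WU: "W \<notin> U"
    have \<beta>_form: "\<beta> \<in> Forms n k" and \<beta>U: "\<forall>Y\<in>U. contr Y \<beta> = fzero" using \<beta>(1) by (auto simp: Ann_def)
    obtain u where \<beta>u: "\<beta> u \<noteq> 0" using \<beta>(2) by (auto simp: fun_eq_iff)
    have "\<forall>m. 1 \<le> m \<and> m < k \<longrightarrow> \<beta> (u(m := W)) = 0"
      using form_slot_contr_fzero[OF \<beta>_form _ W_contr[OF \<beta>(1)]] by blast
    with notin_span_slots[OF \<beta>_form \<beta>u U \<beta>U W_Rn WU]
    have "W \<notin> vs.span (U \<union> u ` {1..<k})" by blast
    with Ann_contr_nonzero_outside_span[OF U(2) k \<beta>_form \<beta>u \<beta>U W_Rn] W_contr show False by metis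
  qed
qed

section \<open>The implications\<close>

lemma C1I:
  assumes "isotropic n k L" and "\<And>X \<alpha>. (X, \<alpha>) \<in> orth n k L \<Longrightarrow> (X, \<alpha>) \<in> L"
  shows "C1 n k L"
proof -
  from assms(2) have "orth n k L \<subseteq> L" by (rule subrelI)
  with assms(1) show ?thesis unfolding C1_def isotropic_def by (rule subset_antisym)
qed

lemma C1_imp_C3s:
  assumes L: "is_subspace n k L" "isotropic n k L" and k: "1 \<le> k" and C1: "C1 n k L"
  shows "C3s n k L"
proof -
  have "Ann n k (prE L) \<subseteq> AL L"
  proof
    fix \<alpha> assume \<alpha>: "\<alpha> \<in> Ann n k (prE L)"
    have "(vzero, \<alpha>) \<in> orth n k L"
    proof (rule orthI)
      fix Y \<beta> assume Y: "(Y, \<beta>) \<in> L"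
      show "fadd (contr vzero \<beta>) (contr Y \<alpha>) = fzero"
        using \<alpha> Y contr_vzero[of \<beta> n k] k subspace_mem[OF L(1) Y] by (auto simp: Ann_def mem_prE)
    qed (use \<alpha> in \<open>simp_all add: Ann_def\<close>)
    with C1 show "\<alpha> \<in> AL L" by (simp add: C1_def mem_AL)
  qed
  with AL_subset_Ann_prE[OF L k] L(2) show ?thesis by (simp add: C3s_def)
qed

lemma C3s_imp_C1:
  assumes S: "std_iso n k L" and k: "1 \<le> k" and C3s: "C3s n k L"
  shows "C1 n k L"
proof -
  have L: "is_subspace n k L" "isotropic n k L" "standard n k L"
    using S by (auto simp: std_iso_def)
  have A: "Ann n k (prE L) = AL L" using C3s by (simp add: C3s_def)
  show ?thesis
  proof (rule C1I[OF L(2)])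
    fix X \<alpha> assume p: "(X, \<alpha>) \<in> orth n k L"
    have X: "X \<in> Rn n" and \<alpha>: "\<alpha> \<in> Forms n k" using orthD(1)[OF p] by auto
    have "contr X \<eta> = fzero" if "\<eta> \<in> Ann n k (prE L)" for \<eta>
      using orthD(2)[OF p, of vzero \<eta>] that A contr_vzero[OF \<alpha> k] by (simp add: mem_AL)
    then have "X \<in> polar n (Ann n k (prE L))" using X by (simp add: polar_def)
    then obtain \<gamma> where \<gamma>: "(X, \<gamma>) \<in> L" using L(3) by (auto simp: standard_def mem_prE)
    define \<delta> where "\<delta> = fadd \<alpha> (fscale (-1) \<gamma>)"
    have "contr Y \<delta> = fzero" if "(Y, \<beta>) \<in> L" for Y \<beta>
    proof
      fix v
      from fun_cong[OF orthD(2)[OF p that], of v] fun_cong[OF isotropicD[OF L(2) \<gamma> that], of v]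
      show "contr Y \<delta> v = fzero v" by (simp add: \<delta>_def contr_fadd contr_fscale fadd_apply fscale_apply)
    qed
    moreover have "\<delta> \<in> Forms n k"
      unfolding \<delta>_def using \<alpha> subspace_mem[OF L(1) \<gamma>] by (blast intro: fadd_Forms fscale_Forms)
    ultimately have "\<delta> \<in> Ann n k (prE L)" by (auto simp: Ann_def mem_prE)
    then have "(vzero, \<delta>) \<in> L" using A by (simp add: mem_AL)
    moreover have "fadd \<gamma> \<delta> = \<alpha>" by (simp add: \<delta>_def fadd_def fscale_def)
    ultimately show "(X, \<alpha>) \<in> L" using subspace_add[OF L(1) \<gamma>, of vzero \<delta>] by simp
  qed
qed

lemma C1_imp_C2w:
  assumes L: "is_subspace n k L" "isotropic n k L" and C1: "C1 n k L"
  shows "C2w n k L"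
proof -
  have "polar n (pr2 L) \<subseteq> LV L"
  proof
    fix X assume X: "X \<in> polar n (pr2 L)"
    have "(X, fzero) \<in> orth n k L"
      by (rule orthI) (use X in \<open>auto simp: polar_def mem_pr2 fzero_Forms\<close>)
    with C1 show "X \<in> LV L" by (simp add: C1_def mem_LV)
  qed
  with LV_subset_polar_pr2[OF L] L(2) show ?thesis by (simp add: C2w_def)
qed

lemma C3s_imp_C3w: "standard n k L \<Longrightarrow> C3s n k L \<Longrightarrow> C3w n k L"
  by (simp add: C3s_def C3w_def standard_def)

lemma LV_subspace:
  assumes L: "is_subspace n k L"
  shows "vs.subspace (LV L)"
  unfolding vs.subspace_def
proof (intro conjI ballI allI)
  show "0 \<in> LV L" using subspace_vzero[OF L] by (simp add: mem_LV vzero_eq_0[symmetric])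
next
  fix x y assume "x \<in> LV L" "y \<in> LV L"
  then show "x + y \<in> LV L" using subspace_add[OF L, of x fzero y fzero] by (simp add: mem_LV vadd_eq_plus)
next
  fix c x assume "x \<in> LV L"
  then show "vscale c x \<in> LV L" using subspace_scale[OF L, of x fzero c] by (simp add: mem_LV)
qed

lemma polar_pr2_subset_LV:
  assumes L: "is_subspace n k L" "standard n k L" and k: "1 \<le> k" and A: "Ann n k (LV L) = pr2 L"
  shows "polar n (pr2 L) \<subseteq> LV L"
proof (cases "pr2 L \<subseteq> {fzero}")
  case True
  then have "prE L = LV L" unfolding set_eq_iff mem_prE mem_LV by (force simp: mem_pr2)
  then show ?thesis using L(2) A by (simp add: standard_def)
next
  case False
  then obtain \<beta> where \<beta>: "\<beta> \<in> Ann n k (LV L)" "\<beta> \<noteq> fzero" using A by auto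
  have "LV L \<subseteq> Rn n" using subspace_mem[OF L(1)] by (auto simp: mem_LV)
  from polar_Ann_subset[OF LV_subspace[OF L(1)] this k \<beta>] show ?thesis by (simp add: A)
qed

lemma C2s_imp_C1:
  assumes S: "std_iso n k L" and k: "1 \<le> k" and C2s: "C2s n k L"
  shows "C1 n k L"
proof -
  have L: "is_subspace n k L" "isotropic n k L" "standard n k L"
    using S by (auto simp: std_iso_def)
  have A: "Ann n k (LV L) = pr2 L" using C2s by (simp add: C2s_def)
  note polar_pr2 = polar_pr2_subset_LV[OF L(1,3) k A]
  show ?thesis
  proof (rule C1I[OF L(2)])
    fix X \<alpha> assume p: "(X, \<alpha>) \<in> orth n k L"
    have X: "X \<in> Rn n" and \<alpha>: "\<alpha> \<in> Forms n k" using orthD(1)[OF p] by auto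
    have "\<alpha> \<in> Ann n k (LV L)" using orthD(2)[OF p, of _ fzero] \<alpha> by (auto simp: Ann_def mem_LV)
    then obtain Z where Z: "(Z, \<alpha>) \<in> L" using A by (auto simp: mem_pr2)
    have Z_Rn: "Z \<in> Rn n" using subspace_mem[OF L(1) Z] by simp
    define W where "W = vadd (vscale 1 X) (vscale (-1) Z)"
    have "contr W \<eta> = fzero" if "(Y, \<eta>) \<in> L" for Y \<eta>
    proof
      fix v
      have "\<eta> \<in> Forms n k" using subspace_mem[OF L(1) that] by simp
      from fun_cong[OF orthD(2)[OF p that], of v] fun_cong[OF isotropicD[OF L(2) Z that], of v]
        fun_cong[OF contr_linear[OF this k X Z_Rn, of 1 "-1"], of v]
      show "contr W \<eta> v = fzero v" by (simp add: W_def fadd_apply fscale_apply)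
    qed
    moreover have "W \<in> Rn n" unfolding W_def using X Z_Rn by (intro Rn_vadd Rn_vscale)
    ultimately have "W \<in> polar n (pr2 L)" by (auto simp: polar_def mem_pr2)
    with polar_pr2 have "(W, fzero) \<in> L" by (auto simp: mem_LV)
    from subspace_add[OF L(1) this Z] show "(X, \<alpha>) \<in> L"
      by (simp add: W_def vadd_def vscale_def)
  qed
qed

section \<open>Examples\<close>

definition unit_vec :: "nat \<Rightarrow> vec" where
  "unit_vec i = (\<lambda>l. if l = i then 1 else 0)"

definition wedge2 :: "nat \<Rightarrow> nat \<Rightarrow> nat \<Rightarrow> form" where
  "wedge2 n i j v =
    (if v 0 \<in> Rn n \<and> v (Suc 0) \<in> Rn n then v 0 i * v (Suc 0) j - v 0 j * v (Suc 0) i else 0)"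

definition args2 :: "vec \<Rightarrow> vec \<Rightarrow> nat \<Rightarrow> vec" where
  "args2 a b = (\<lambda>l. if l = 0 then a else b)"

lemma unit_vec_Rn [simp]: "i < n \<Longrightarrow> unit_vec i \<in> Rn n"
  and unit_vec_apply [simp]: "unit_vec i l = (if l = i then 1 else 0)"
  and args2_simps [simp]: "args2 a b 0 = a" "args2 a b (Suc 0) = b"
  by (simp_all add: unit_vec_def Rn_def args2_def)

lemma wedge2_Forms: "wedge2 n i j \<in> Forms n 2"
  unfolding Forms_def mem_Collect_eq is_form_def
proof (intro conjI allI impI)
  fix v w :: "nat \<Rightarrow> vec" assume "\<forall>l<2. v l = w l"
  then have "v 0 = w 0" "v (Suc 0) = w (Suc 0)" by auto
  then show "wedge2 n i j v = wedge2 n i j w" by (simp add: wedge2_def)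
next
  fix v :: "nat \<Rightarrow> vec" assume "\<exists>l<2. v l \<notin> Rn n"
  then show "wedge2 n i j v = 0" by (auto simp: wedge2_def less_2_cases_iff)
next
  fix v :: "nat \<Rightarrow> vec" and l :: nat and x y a b
  assume "l < 2 \<and> (\<forall>m<2. v m \<in> Rn n) \<and> x \<in> Rn n \<and> y \<in> Rn n"
  then show "wedge2 n i j (v(l := vadd (vscale a x) (vscale b y))) =
      a * wedge2 n i j (v(l := x)) + b * wedge2 n i j (v(l := y))"
    by (auto simp: wedge2_def vadd_def vscale_def algebra_simps less_2_cases_iff Rn_def)
next
  fix v :: "nat \<Rightarrow> vec" and l m assume "l < 2 \<and> m < 2 \<and> l \<noteq> m \<and> v l = v m"
  then have "v 0 = v (Suc 0)" by (auto simp: less_2_cases_iff)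
  then show "wedge2 n i j v = 0" by (simp add: wedge2_def)
qed

lemma contr_wedge2:
  "contr X (wedge2 n i j) = (\<lambda>v. if X \<in> Rn n \<and> v 0 \<in> Rn n then X i * v 0 j - X j * v 0 i else 0)"
  by (simp add: contr_def wedge2_def cong: if_cong)

lemmas form_eval_simps =
  contr_fadd contr_fscale contr_wedge2 fadd_apply fscale_apply vscale_def vadd_def vzero_def

lemma polar_wedge2D:
  assumes "X \<in> polar n S" "wedge2 n i j \<in> S" "i < n" "j < n" "i \<noteq> j"
  shows "X i = 0 \<and> X j = 0"
proof -
  have "contr X (wedge2 n i j) = fzero" using assms(1,2) by (simp add: polar_def)
  from fun_cong[OF this, of "\<lambda>l. unit_vec j"] fun_cong[OF this, of "\<lambda>l. unit_vec i"]
  show ?thesis using assms by (simp add: contr_wedge2 polar_def)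
qed

lemma vzero_in_polar: "S \<subseteq> Forms n k \<Longrightarrow> 1 \<le> k \<Longrightarrow> vzero \<in> polar n S"
  unfolding polar_def using contr_vzero by auto

lemma standardI:
  assumes "prE L \<subseteq> Rn n" "polar n (Ann n k (prE L)) \<subseteq> prE L"
  shows "standard n k L"
proof -
  have "prE L \<subseteq> polar n (Ann n k (prE L))" using assms(1) by (auto simp: polar_def Ann_def)
  with assms(2) show ?thesis unfolding standard_def by (rule subset_antisym)
qed

lemma is_subspace_range:
  fixes f :: "'p::real_vector \<Rightarrow> vec" and g :: "'p \<Rightarrow> form"
  assumes "\<And>p. f p \<in> Rn n" "\<And>p. g p \<in> Forms n k"
    and "\<And>p q. f (p + q) = vadd (f p) (f q)" "\<And>c p. f (c *\<^sub>R p) = vscale c (f p)"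
    and "\<And>p q. g (p + q) = fadd (g p) (g q)" "\<And>c p. g (c *\<^sub>R p) = fscale c (g p)"
  shows "is_subspace n k (range (\<lambda>p. (f p, g p)))"
  unfolding is_subspace_def
proof (intro conjI ballI allI)
  show "range (\<lambda>p. (f p, g p)) \<subseteq> Rn n \<times> Forms n k" using assms(1,2) by auto
  have "f 0 = vzero" "g 0 = fzero" using assms(4,6)[of 0 0] by (simp_all add: fscale_def fzero_def)
  then show "(vzero, fzero) \<in> range (\<lambda>p. (f p, g p))" using rangeI[of "\<lambda>p. (f p, g p)" 0] by simp
next
  fix a b assume "a \<in> range (\<lambda>p. (f p, g p))" "b \<in> range (\<lambda>p. (f p, g p))"
  then obtain p q where "a = (f p, g p)" "b = (f q, g q)" by blast
  moreover have "(f (p + q), g (p + q)) \<in> range (\<lambda>p. (f p, g p))" by (rule rangeI)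
  ultimately show "(vadd (fst a) (fst b), fadd (snd a) (snd b)) \<in> range (\<lambda>p. (f p, g p))"
    using assms(3,5) by simp
next
  fix c a assume "a \<in> range (\<lambda>p. (f p, g p))"
  then obtain p where "a = (f p, g p)" by blast
  moreover have "(f (c *\<^sub>R p), g (c *\<^sub>R p)) \<in> range (\<lambda>p. (f p, g p))" by (rule rangeI)
  ultimately show "(vscale c (fst a), fscale c (snd a)) \<in> range (\<lambda>p. (f p, g p))"
    using assms(4,6) by simp
qed

lemma isotropic_range:
  assumes "\<And>p. f p \<in> Rn n" "\<And>p. g p \<in> Forms n k"
    and "\<And>p q. fadd (contr (f p) (g q)) (contr (f q) (g p)) = fzero"
  shows "isotropic n k (range (\<lambda>p. (f p, g p)))"
  unfolding isotropic_def using assms by (auto intro: orthI)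

lemma prE_range: "prE (range (\<lambda>p. (f p, g p))) = range f"
  and pr2_range: "pr2 (range (\<lambda>p. (f p, g p))) = range g"
  by (auto simp: prE_def pr2_def image_iff)

definition Lc_form :: "real \<times> real \<Rightarrow> form" where
  "Lc_form p = fadd (fscale (fst p) (wedge2 3 0 1)) (fscale (snd p) (wedge2 3 0 2))"

definition Lc :: "(vec \<times> form) set" where
  "Lc = range (\<lambda>p. (vzero, Lc_form p))"

lemma Lc_form_Forms: "Lc_form p \<in> Forms 3 2"
  unfolding Lc_form_def by (intro fadd_Forms fscale_Forms wedge2_Forms)

lemma polar_Lc_subset:
  assumes "wedge2 3 0 1 \<in> S" "wedge2 3 0 2 \<in> S"
  shows "polar 3 S \<subseteq> {vzero}"
proof
  fix X assume X: "X \<in> polar 3 S"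
  then have "X 0 = 0" "X 1 = 0" "X 2 = 0"
    using polar_wedge2D[OF X assms(1)] polar_wedge2D[OF X assms(2)] by auto
  moreover have "X \<in> Rn 3" using X by (simp add: polar_def)
  ultimately have "X = vzero"
    by (intro Rn_eqI[OF _ Rn_vzero]) (auto simp: vzero_def less_Suc_eq numeral_eq_Suc)
  then show "X \<in> {vzero}" by simp
qed

lemma Lc_std_C2w_C3w_not_C1: "std_iso 3 2 Lc \<and> C2w 3 2 Lc \<and> C3w 3 2 Lc \<and> \<not> C1 3 2 Lc"
proof -
  have Lc_form_basis: "Lc_form (1, 0) = wedge2 3 0 1" "Lc_form (0, 1) = wedge2 3 0 2"
    by (simp_all add: Lc_form_def fadd_def fscale_def)
  have sub: "is_subspace 3 2 Lc" unfolding Lc_def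
    by (rule is_subspace_range[OF _ Lc_form_Forms])
      (simp_all add: Lc_form_def fun_eq_iff fadd_def fscale_def algebra_simps)
  have iso: "isotropic 3 2 Lc" unfolding Lc_def
    by (rule isotropic_range) (simp_all add: Lc_form_Forms contr_vzero[OF Lc_form_Forms])
  have E: "prE Lc = {vzero}" unfolding Lc_def prE_range by auto
  have LV: "LV Lc = {vzero}" and AL: "AL Lc = range Lc_form" and pr2: "pr2 Lc = range Lc_form"
    using subspace_vzero[OF sub] by (auto simp: mem_LV mem_AL Lc_def pr2_range)
  have "polar 3 (range Lc_form) \<subseteq> {vzero}"
    by (rule polar_Lc_subset) (metis Lc_form_basis rangeI)+
  moreover have "vzero \<in> polar 3 (range Lc_form)"
    by (rule vzero_in_polar[of _ 3 2]) (auto simp: Lc_form_Forms)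
  ultimately have polar: "polar 3 (range Lc_form) = {vzero}" by blast
  have "polar 3 (Ann 3 2 {vzero}) \<subseteq> {vzero}"
    by (rule polar_Lc_subset) (simp_all add: Ann_def wedge2_Forms contr_vzero[OF wedge2_Forms])
  then have std: "standard 3 2 Lc" by (intro standardI) (simp_all add: E)
  text \<open>\<open>Lc\<close> lies in \<open>\<wedge>\<^sup>2V\<^sup>*\<close>, hence is orthogonal to \<open>e\<^sup>1 \<and> e\<^sup>2\<close>, which it misses.\<close>
  have "(vzero, wedge2 3 1 2) \<in> orth 3 2 Lc"
    by (rule orthI)
      (auto simp: Lc_def wedge2_Forms contr_vzero[OF wedge2_Forms] contr_vzero[OF Lc_form_Forms])
  moreover have "(vzero, wedge2 3 1 2) \<notin> Lc"
  proof
    assume "(vzero, wedge2 3 1 2) \<in> Lc"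
    then obtain p where "wedge2 3 1 2 = Lc_form p" by (auto simp: Lc_def)
    from fun_cong[OF this, of "args2 (unit_vec 1) (unit_vec 2)"] show False
      by (simp add: Lc_form_def wedge2_def fadd_def fscale_def)
  qed
  ultimately have "\<not> C1 3 2 Lc" by (auto simp: C1_def)
  with sub iso std LV pr2 AL E polar show ?thesis by (simp add: std_iso_def C2w_def C3w_def)
qed

definition La_vec :: "real \<times> real \<times> real \<Rightarrow> vec" where
  "La_vec p = vscale (fst p) (unit_vec 0)"

definition La_form :: "real \<times> real \<times> real \<Rightarrow> form" where
  "La_form p = fadd (fscale (fst p) (wedge2 4 2 3))
     (fadd (fscale (fst (snd p)) (wedge2 4 1 2)) (fscale (snd (snd p)) (wedge2 4 1 3)))"

definition La :: "(vec \<times> form) set" where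
  "La = range (\<lambda>p. (La_vec p, La_form p))"

lemma La_vec_Rn: "La_vec p \<in> Rn 4"
  and La_form_Forms: "La_form p \<in> Forms 4 2"
  unfolding La_vec_def La_form_def by (simp, intro fadd_Forms fscale_Forms wedge2_Forms)

lemma contr_La_vec_wedge2: "i \<noteq> 0 \<Longrightarrow> j \<noteq> 0 \<Longrightarrow> contr (La_vec p) (wedge2 4 i j) = fzero"
  by (simp add: fun_eq_iff contr_wedge2 La_vec_def vscale_def cong: if_cong)

lemma contr_La_vec_La_form: "contr (La_vec p) (La_form q) = fzero"
  by (simp add: La_form_def contr_fadd contr_fscale contr_La_vec_wedge2)

lemma polar_La_subset:
  assumes "wedge2 4 1 2 \<in> S" "wedge2 4 1 3 \<in> S"
  shows "polar 4 S \<subseteq> range La_vec"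
proof
  fix X assume X: "X \<in> polar 4 S"
  then have "X 1 = 0" "X 2 = 0" "X 3 = 0"
    using polar_wedge2D[OF X assms(1)] polar_wedge2D[OF X assms(2)] by auto
  moreover have "X \<in> Rn 4" using X by (simp add: polar_def)
  ultimately have "X = La_vec (X 0, 0, 0)"
    by (intro Rn_eqI[OF _ La_vec_Rn]) (auto simp: La_vec_def vscale_def less_Suc_eq numeral_eq_Suc)
  then show "X \<in> range La_vec" by (metis rangeI)
qed

lemma La_std_C3w_not_C2w: "std_iso 4 2 La \<and> C3w 4 2 La \<and> \<not> C2w 4 2 La"
proof -
  have sub: "is_subspace 4 2 La" unfolding La_def
    by (rule is_subspace_range[OF La_vec_Rn La_form_Forms])
      (simp_all add: La_vec_def La_form_def fun_eq_iff fadd_def fscale_def vadd_def vscale_def algebra_simps)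
  have iso: "isotropic 4 2 La" unfolding La_def
    by (rule isotropic_range) (simp_all add: La_form_Forms La_vec_Rn contr_La_vec_La_form)
  have E: "prE La = range La_vec" unfolding La_def prE_range ..
  have "wedge2 4 1 2 \<in> Ann 4 2 (range La_vec)" "wedge2 4 1 3 \<in> Ann 4 2 (range La_vec)"
    by (auto simp: Ann_def wedge2_Forms contr_La_vec_wedge2)
  from polar_La_subset[OF this] have std: "standard 4 2 La"
    using La_vec_Rn by (intro standardI) (auto simp: E)
  have "(La_vec (0, 1, 0), La_form (0, 1, 0)) \<in> La" "(La_vec (0, 0, 1), La_form (0, 0, 1)) \<in> La"
    unfolding La_def by (rule rangeI)+
  then have "wedge2 4 1 2 \<in> AL La" "wedge2 4 1 3 \<in> AL La"
    by (simp_all add: mem_AL La_vec_def La_form_def fadd_def fscale_def)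
  from polar_La_subset[OF this] prE_subset_polar_AL[OF sub iso] have "C3w 4 2 La"
    using iso by (simp add: C3w_def E)
  text \<open>\<open>e\<^sub>0\<close> annihilates all forms in \<open>La\<close>, but every element over \<open>e\<^sub>0\<close> carries \<open>e\<^sup>2 \<and> e\<^sup>3\<close>.\<close>
  moreover have "unit_vec 0 \<in> polar 4 (pr2 La)"
    using contr_La_vec_La_form[of "(1, 0, 0)"] by (auto simp: La_def pr2_range polar_def La_vec_def)
  moreover have "unit_vec 0 \<notin> LV La"
  proof
    assume "unit_vec 0 \<in> LV La"
    then obtain p where p: "unit_vec 0 = La_vec p" "fzero = La_form p" by (auto simp: mem_LV La_def)
    have "fst p = 1" using fun_cong[OF p(1), of 0] by (simp add: La_vec_def vscale_def)
    moreover have "La_form p (args2 (unit_vec 2) (unit_vec 3)) = 0" using p(2) by (metis fzero_apply)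
    ultimately show False by (simp add: La_form_def fadd_def fscale_def wedge2_def)
  qed
  ultimately show ?thesis using sub iso std by (auto simp: std_iso_def C2w_def)
qed

definition Lb_vec :: "real \<times> real \<Rightarrow> vec" where
  "Lb_vec p = vadd (vscale (fst p) (unit_vec 0)) (vscale (snd p) (unit_vec 1))"

definition Lb_form :: "real \<times> real \<Rightarrow> form" where
  "Lb_form p = fadd (fscale (fst p) (fadd (wedge2 5 1 2) (wedge2 5 3 4)))
     (fscale (snd p) (fadd (wedge2 5 2 0) (wedge2 5 3 4)))"

definition Lb :: "(vec \<times> form) set" where
  "Lb = range (\<lambda>p. (Lb_vec p, Lb_form p))"

lemma Lb_vec_Rn: "Lb_vec p \<in> Rn 5"
  and Lb_form_Forms: "Lb_form p \<in> Forms 5 2"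
  unfolding Lb_vec_def Lb_form_def by (simp, intro fadd_Forms fscale_Forms wedge2_Forms)

lemma Lb_pairing: "fadd (contr (Lb_vec p) (Lb_form q)) (contr (Lb_vec q) (Lb_form p)) = fzero"
proof
  fix v
  show "fadd (contr (Lb_vec p) (Lb_form q)) (contr (Lb_vec q) (Lb_form p)) v = fzero v"
    by (simp add: Lb_form_def form_eval_simps Lb_vec_Rn cong: if_cong)
      (simp add: Lb_vec_def vadd_def vscale_def algebra_simps)
qed

lemma contr_Lb_vec_wedge2: "2 \<le> i \<Longrightarrow> 2 \<le> j \<Longrightarrow> contr (Lb_vec p) (wedge2 5 i j) = fzero"
  by (simp add: fun_eq_iff contr_wedge2 Lb_vec_def vscale_def vadd_def cong: if_cong)

lemma polar_Lb_subset:
  assumes "wedge2 5 2 3 \<in> S" "wedge2 5 3 4 \<in> S"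
  shows "polar 5 S \<subseteq> range Lb_vec"
proof
  fix X assume X: "X \<in> polar 5 S"
  then have "X 2 = 0" "X 3 = 0" "X 4 = 0"
    using polar_wedge2D[OF X assms(1)] polar_wedge2D[OF X assms(2)] by auto
  moreover have "X \<in> Rn 5" using X by (simp add: polar_def)
  ultimately have "X = Lb_vec (X 0, X 1)"
    by (intro Rn_eqI[OF _ Lb_vec_Rn]) (auto simp: Lb_vec_def vscale_def vadd_def less_Suc_eq numeral_eq_Suc)
  then show "X \<in> range Lb_vec" by (metis rangeI)
qed

lemma Lb_std_C2w_not_C3w: "std_iso 5 2 Lb \<and> C2w 5 2 Lb \<and> \<not> C3w 5 2 Lb"
proof -
  have sub: "is_subspace 5 2 Lb" unfolding Lb_def
    by (rule is_subspace_range[OF Lb_vec_Rn Lb_form_Forms])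
      (simp_all add: Lb_vec_def Lb_form_def fun_eq_iff fadd_def fscale_def vadd_def vscale_def algebra_simps)
  have iso: "isotropic 5 2 Lb" unfolding Lb_def
    by (rule isotropic_range) (simp_all add: Lb_form_Forms Lb_vec_Rn Lb_pairing)
  have E: "prE Lb = range Lb_vec" unfolding Lb_def prE_range ..
  have "wedge2 5 2 3 \<in> Ann 5 2 (range Lb_vec)" "wedge2 5 3 4 \<in> Ann 5 2 (range Lb_vec)"
    by (auto simp: Ann_def wedge2_Forms contr_Lb_vec_wedge2)
  from polar_Lb_subset[OF this] have std: "standard 5 2 Lb"
    using Lb_vec_Rn by (intro standardI) (auto simp: E)
  have form_zero: "fst p = 0 \<and> snd p = 0" if "Lb_form p = fzero" for p
    using fun_cong[OF that, of "args2 (unit_vec 1) (unit_vec 2)"] fun_cong[OF that, of "args2 (unit_vec 2) (unit_vec 0)"]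
    by (simp add: Lb_form_def fadd_def fscale_def wedge2_def)
  have "LV Lb = {vzero}"
  proof
    show "LV Lb \<subseteq> {vzero}"
    proof
      fix X assume "X \<in> LV Lb"
      then obtain p where "X = Lb_vec p" "fzero = Lb_form p" by (auto simp: mem_LV Lb_def)
      with form_zero[OF sym] show "X \<in> {vzero}" by (simp add: Lb_vec_def)
    qed
    show "{vzero} \<subseteq> LV Lb" using subspace_vzero[OF sub] by (simp add: mem_LV)
  qed
  moreover have "polar 5 (pr2 Lb) = {vzero}"
  proof
    show "polar 5 (pr2 Lb) \<subseteq> {vzero}"
    proof
      fix X assume X: "X \<in> polar 5 (pr2 Lb)"
      have "contr X (Lb_form (a, b)) = fzero" for a b using X by (simp add: polar_def Lb_def pr2_range)
      from fun_cong[OF this[of 1 0]] fun_cong[OF this[of 0 1]]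
      have "contr X (Lb_form (1, 0)) (\<lambda>l. unit_vec m) = 0" "contr X (Lb_form (0, 1)) (\<lambda>l. unit_vec m) = 0" for m
        by simp_all
      note eval = this[unfolded Lb_form_def, simplified form_eval_simps]
      moreover have "X \<in> Rn 5" using X by (simp add: polar_def)
      ultimately have "X 1 = 0" "X 2 = 0" "X 3 = 0" "X 4 = 0" "X 0 = 0"
        using eval(1)[of 2] eval(1)[of 1] eval(1)[of 4] eval(1)[of 3] eval(2)[of 2] by simp_all
      with \<open>X \<in> Rn 5\<close> have "X = vzero"
        by (intro Rn_eqI[OF _ Rn_vzero]) (auto simp: vzero_def less_Suc_eq numeral_eq_Suc)
      then show "X \<in> {vzero}" by simp
    qed
    show "{vzero} \<subseteq> polar 5 (pr2 Lb)"
      using vzero_in_polar[of "pr2 Lb" 5 2] Lb_form_Forms by (auto simp: Lb_def pr2_range image_subset_iff)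
  qed
  ultimately have "C2w 5 2 Lb" using iso by (simp add: C2w_def)
  text \<open>\<open>AL Lb = 0\<close>, so its polar is all of \<open>V\<close>, while \<open>e\<^sub>2 \<notin> E\<close>.\<close>
  moreover have "unit_vec 2 \<in> polar 5 (AL Lb)"
  proof -
    have "AL Lb \<subseteq> {fzero}"
    proof
      fix \<alpha> assume "\<alpha> \<in> AL Lb"
      then obtain p where p: "vzero = Lb_vec p" "\<alpha> = Lb_form p" by (auto simp: mem_AL Lb_def)
      have "fst p = 0" "snd p = 0" using fun_cong[OF p(1), of 0] fun_cong[OF p(1), of 1]
        by (simp_all add: Lb_vec_def vadd_def vscale_def vzero_def)
      then show "\<alpha> \<in> {fzero}" using p(2) by (simp add: Lb_form_def fadd_def fscale_def fzero_def)
    qed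
    then show ?thesis by (auto simp: polar_def)
  qed
  moreover have "unit_vec 2 \<notin> prE Lb"
  proof
    assume "unit_vec 2 \<in> prE Lb"
    then obtain p where "unit_vec 2 = Lb_vec p" by (auto simp: E)
    from fun_cong[OF this, of 2] show False by (simp add: Lb_vec_def vadd_def vscale_def)
  qed
  ultimately show ?thesis using sub iso std by (auto simp: std_iso_def C3w_def)
qed

text \<open>\<open>Ld_form X = i\<^sub>X \<phi>\<close> for the 3-form \<open>\<phi> = e\<^sup>0\<^sup>1\<^sup>2 + e\<^sup>2\<^sup>3\<^sup>4\<close>, so its graph \<open>Ld\<close> is isotropic.\<close>
definition Ld_form :: "vec \<Rightarrow> form" where
  "Ld_form X = fadd (fscale (X 0) (wedge2 5 1 2)) (fadd (fscale (- X 1) (wedge2 5 0 2))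
     (fadd (fscale (X 2) (fadd (wedge2 5 0 1) (wedge2 5 3 4)))
     (fadd (fscale (- X 3) (wedge2 5 2 4)) (fscale (X 4) (wedge2 5 2 3)))))"

definition Ld :: "(vec \<times> form) set" where
  "Ld = (\<lambda>X. (X, Ld_form X)) ` Rn 5"

lemma Ld_form_Forms: "Ld_form X \<in> Forms 5 2"
  unfolding Ld_form_def by (intro fadd_Forms fscale_Forms wedge2_Forms)

lemma Ld_form_vzero [simp]: "Ld_form vzero = fzero"
  by (simp add: Ld_form_def fun_eq_iff fadd_def fscale_def vzero_def)

lemma Ld_pairing:
  "X \<in> Rn 5 \<Longrightarrow> Y \<in> Rn 5 \<Longrightarrow> fadd (contr X (Ld_form Y)) (contr Y (Ld_form X)) = fzero"
  by (rule ext) (simp add: Ld_form_def form_eval_simps cong: if_cong, simp add: algebra_simps)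

lemma Ld_form_eq_fzeroD:
  assumes "X \<in> Rn 5" "Ld_form X = fzero"
  shows "X = vzero"
proof -
  have "Ld_form X (args2 (unit_vec a) (unit_vec b)) = 0" for a b using assms(2) by simp
  note eval = this[unfolded Ld_form_def, simplified fadd_apply fscale_apply wedge2_def]
  have "X 0 = 0" "X 1 = 0" "X 2 = 0" "X 3 = 0" "X 4 = 0"
    using eval[of 1 2] eval[of 0 2] eval[of 0 1] eval[of 2 4] eval[of 2 3] by simp_all
  with assms(1) show ?thesis
    by (intro Rn_eqI[OF _ Rn_vzero]) (auto simp: vzero_def less_Suc_eq numeral_eq_Suc)
qed

lemma Ld_std_C3s_not_C2s: "std_iso 5 2 Ld \<and> C3s 5 2 Ld \<and> \<not> C2s 5 2 Ld"
proof -
  have sub: "is_subspace 5 2 Ld"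
    unfolding is_subspace_def
  proof (intro conjI ballI allI)
    show "Ld \<subseteq> Rn 5 \<times> Forms 5 2" using Ld_form_Forms by (auto simp: Ld_def)
    show "(vzero, fzero) \<in> Ld" unfolding Ld_def using Rn_vzero by (metis Ld_form_vzero image_eqI)
  next
    fix a b assume "a \<in> Ld" "b \<in> Ld"
    then obtain X Y where XY: "a = (X, Ld_form X)" "b = (Y, Ld_form Y)" "X \<in> Rn 5" "Y \<in> Rn 5"
      by (auto simp: Ld_def)
    have "Ld_form (vadd X Y) = fadd (Ld_form X) (Ld_form Y)"
      by (simp add: Ld_form_def fun_eq_iff fadd_def fscale_def vadd_def algebra_simps)
    moreover have "(vadd X Y, Ld_form (vadd X Y)) \<in> Ld" using XY by (simp add: Ld_def)
    ultimately show "(vadd (fst a) (fst b), fadd (snd a) (snd b)) \<in> Ld" using XY by simp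
  next
    fix c a assume "a \<in> Ld"
    then obtain X where X: "a = (X, Ld_form X)" "X \<in> Rn 5" by (auto simp: Ld_def)
    have "Ld_form (vscale c X) = fscale c (Ld_form X)"
      by (simp add: Ld_form_def fun_eq_iff fadd_def fscale_def vscale_def algebra_simps)
    moreover have "(vscale c X, Ld_form (vscale c X)) \<in> Ld" using X by (simp add: Ld_def)
    ultimately show "(vscale c (fst a), fscale c (snd a)) \<in> Ld" using X by simp
  qed
  have iso: "isotropic 5 2 Ld"
    unfolding isotropic_def by (auto simp: Ld_def Ld_form_Forms Ld_pairing intro!: orthI)
  have E: "prE Ld = Rn 5" by (force simp: prE_def Ld_def)
  have std: "standard 5 2 Ld" by (rule standardI) (auto simp: E polar_def)
  have "Ann 5 2 (Rn 5) = {fzero}"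
    using form_eq_fzeroI[of _ 5 2] fzero_Forms by (auto simp: Ann_def)
  moreover have "AL Ld = {fzero}"
    unfolding set_eq_iff mem_AL Ld_def by (force simp: image_iff)
  ultimately have C3s: "C3s 5 2 Ld" using iso E by (simp add: C3s_def)
  text \<open>\<open>LV Ld = 0\<close>, so \<open>e\<^sup>0 \<and> e\<^sup>1\<close> annihilates it, but \<open>e\<^sup>0 \<and> e\<^sup>1\<close> is not of the form \<open>i\<^sub>X \<phi>\<close>.\<close>
  have "LV Ld \<subseteq> {vzero}" using Ld_form_eq_fzeroD by (force simp: mem_LV Ld_def)
  then have "wedge2 5 0 1 \<in> Ann 5 2 (LV Ld)"
    using contr_vzero[OF wedge2_Forms, of 5 0 1] by (auto simp: Ann_def wedge2_Forms)
  moreover have "wedge2 5 0 1 \<notin> pr2 Ld"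
  proof
    assume "wedge2 5 0 1 \<in> pr2 Ld"
    then obtain X where X: "wedge2 5 0 1 = Ld_form X" by (auto simp: pr2_def Ld_def)
    from fun_cong[OF X, of "args2 (unit_vec 0) (unit_vec 1)"] fun_cong[OF X, of "args2 (unit_vec 3) (unit_vec 4)"]
    show False by (simp add: Ld_form_def fadd_def fscale_def wedge2_def)
  qed
  ultimately show ?thesis using sub iso std C3s by (auto simp: std_iso_def C2s_def)
qed

theorem propositionA2:
  shows "(\<forall>n k L. 2 \<le> k \<and> k \<le> n - 1 \<and> std_iso n k L \<longrightarrow>
            (C2s n k L \<longrightarrow> C1 n k L) \<and> (C1 n k L \<longleftrightarrow> C3s n k L) \<and>
            (C3s n k L \<longrightarrow> C2w n k L \<and> C3w n k L)) \<and>
         (\<exists>n k L. 2 \<le> k \<and> k \<le> n - 1 \<and> std_iso n k L \<and> C3w n k L \<and> \<not> C2w n k L) \<and>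
         (\<exists>n k L. 2 \<le> k \<and> k \<le> n - 1 \<and> std_iso n k L \<and> C2w n k L \<and> \<not> C3w n k L) \<and>
         (\<exists>n k L. 2 \<le> k \<and> k \<le> n - 1 \<and> std_iso n k L \<and> C2w n k L \<and> C3w n k L \<and> \<not> C1 n k L) \<and>
         (\<exists>n k L. 2 \<le> k \<and> k \<le> n - 1 \<and> std_iso n k L \<and> C3s n k L \<and> \<not> C2s n k L)"
proof -
  have implications: "(C2s n k L \<longrightarrow> C1 n k L) \<and> (C1 n k L \<longleftrightarrow> C3s n k L) \<and>
      (C3s n k L \<longrightarrow> C2w n k L \<and> C3w n k L)" if k: "1 \<le> k" and S: "std_iso n k L" for n k L
  proof -
    have L: "is_subspace n k L" "isotropic n k L" "standard n k L" using S by (auto simp: std_iso_def)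
    show ?thesis
      using C2s_imp_C1[OF S k] C1_imp_C3s[OF L(1,2) k] C3s_imp_C1[OF S k] C1_imp_C2w[OF L(1,2)]
        C3s_imp_C3w[OF L(3)] by blast
  qed
  have "\<exists>n k L. 2 \<le> k \<and> k \<le> n - 1 \<and> std_iso n k L \<and> C3w n k L \<and> \<not> C2w n k L"
    using La_std_C3w_not_C2w by (intro exI[of _ 4] exI[of _ 2] exI[of _ La]) simp
  moreover have "\<exists>n k L. 2 \<le> k \<and> k \<le> n - 1 \<and> std_iso n k L \<and> C2w n k L \<and> \<not> C3w n k L"
    using Lb_std_C2w_not_C3w by (intro exI[of _ 5] exI[of _ 2] exI[of _ Lb]) simp
  moreover have "\<exists>n k L. 2 \<le> k \<and> k \<le> n - 1 \<and> std_iso n k L \<and> C2w n k L \<and> C3w n k L \<and> \<not> C1 n k L"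
    using Lc_std_C2w_C3w_not_C1 by (intro exI[of _ 3] exI[of _ 2] exI[of _ Lc]) simp
  moreover have "\<exists>n k L. 2 \<le> k \<and> k \<le> n - 1 \<and> std_iso n k L \<and> C3s n k L \<and> \<not> C2s n k L"
    using Ld_std_C3s_not_C2s by (intro exI[of _ 5] exI[of _ 2] exI[of _ Ld]) simp
  ultimately show ?thesis using implications by simp
qed

end
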